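(* Let $N\ge1$, and let $q,t$ be parameters. For $n\in\mathbb{Z}$ define the generalized Macdonald operator $$\mathcal M_{1,n}=\sum_{i=1}^{N}x_i^{\,n}\prod_{j\neq i}\frac{t x_i-x_j}{x_i-x_j}\,\Gamma_i,$$ where $(\Gamma_if)(x_1,\dots,x_N)=f(\dots,qx_i,\dots)$, and the current $\mathfrak e(z)=\frac{q^{1/2}}{1-q}\sum_{n\in\mathbb{Z}}q^{n/2}z^n\mathcal M_{1,n}$. Then, as formal series in $z^{\pm1},w^{\pm1}$ with operator coefficients, $$g(z,w)\,\mathfrak e(z)\mathfrak e(w)+g(w,z)\,\mathfrak e(w)\mathfrak e(z)=0,\qquad g(z,w)=(z-qw)(z-t^{-1}w)(z-q^{-1}tw).$$
   Context: The operators act on symmetric functions in $x_1,\dots,x_N$. This is the $\mathfrak e\mathfrak e$ exchange relation of the Ding–Iohara–Miki (quantum toroidal $\mathfrak{gl}_1$) algebra. *)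

theory Defs
  imports "HOL-Analysis.Analysis" "HOL-Computational_Algebra.Polynomial"
begin

text \<open>Functions of the variables x_1..x_N, indexed by a finite type 'n (N = CARD('n) >= 1).\<close>
type_synonym 'n fn = "('n \<Rightarrow> complex) \<Rightarrow> complex"

definition symmetric_fn :: "'n::finite fn \<Rightarrow> bool" where
  "symmetric_fn f \<longleftrightarrow> (\<forall>\<sigma> x. \<sigma> permutes (UNIV::'n set) \<longrightarrow> f (x \<circ> \<sigma>) = f x)"

definition Gam :: "complex \<Rightarrow> 'n \<Rightarrow> 'n fn \<Rightarrow> 'n fn" where
  "Gam q i f = (\<lambda>x. f (x(i := q * x i)))"

definition Mop :: "complex \<Rightarrow> complex \<Rightarrow> int \<Rightarrow> 'n::finite fn \<Rightarrow> 'n fn" where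
  "Mop q t n f = (\<lambda>x. \<Sum>i\<in>UNIV. x i powi n *
      (\<Prod>j\<in>UNIV - {i}. (t * x i - x j) / (x i - x j)) * Gam q i f x)"

text \<open>Coefficient of z^n in e(z); s plays the role of q^{1/2}, so q = s^2.\<close>
definition ecoef :: "complex \<Rightarrow> complex \<Rightarrow> int \<Rightarrow> 'n::finite fn \<Rightarrow> 'n fn" where
  "ecoef s t n f = (\<lambda>x. s / (1 - s^2) * s powi n * Mop (s^2) t n f x)"

text \<open>g(z,1) = (z - q)(z - t^{-1})(z - q^{-1} t); g(z,w) = sum_k coeff k * z^k w^(3-k).\<close>
definition gpoly :: "complex \<Rightarrow> complex \<Rightarrow> complex poly" where
  "gpoly q t = [:- q, 1:] * [:- inverse t, 1:] * [:- (t / q), 1:]"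

definition gcoef :: "complex \<Rightarrow> complex \<Rightarrow> int \<Rightarrow> int \<Rightarrow> complex" where
  "gcoef q t i j = (if 0 \<le> i \<and> 0 \<le> j \<and> i + j = 3 then coeff (gpoly q t) (nat i) else 0)"

definition generic_pt :: "complex \<Rightarrow> ('n \<Rightarrow> complex) \<Rightarrow> bool" where
  "generic_pt q x \<longleftrightarrow> (\<forall>i. x i \<noteq> 0) \<and> (\<forall>i j. i \<noteq> j \<longrightarrow> x i \<noteq> x j \<and> q * x i \<noteq> x j)"

end

theory Submission
  imports Defs
begin

text \<open>Applying e_m e_n to f at x gives a double sum over pairs (p, r) of a weight times the
monomial u^m v^n, where u = s x_p and v = s x'_r, with x' the point x with x_p already q-shifted.
As g is homogeneous of degree 3, the g-weighted combination of modes replaces each monomial by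
(u^a v^b + u^b v^a) g(1/u, 1/v). For p = r the factor z - q w of g vanishes since x'_p = q x_p.
For p \<noteq> r, the two-point factors (t x_p - x_r)/(x_p - x_r) and (t x_r - q x_p)/(x_r - q x_p)
times g are antisymmetric under p \<leftrightarrow> r, while the remaining factors and the doubly shifted
argument of f are symmetric. So the terms cancel in pairs.\<close>

definition structure_fn :: "complex \<Rightarrow> complex \<Rightarrow> complex \<Rightarrow> complex \<Rightarrow> complex" where
  "structure_fn q t z w = (z - q * w) * (z - w / t) * (z - t / q * w)"

lemma coeff_cubic:
  fixes \<alpha> \<beta> \<gamma> :: complex
  shows "coeff ([:- \<alpha>, 1:] * [:- \<beta>, 1:] * [:- \<gamma>, 1:]) 0 = - (\<alpha> * \<beta> * \<gamma>)"
    and "coeff ([:- \<alpha>, 1:] * [:- \<beta>, 1:] * [:- \<gamma>, 1:]) 1 = \<alpha> * \<beta> + \<alpha> * \<gamma> + \<beta> * \<gamma>"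
    and "coeff ([:- \<alpha>, 1:] * [:- \<beta>, 1:] * [:- \<gamma>, 1:]) 2 = - (\<alpha> + \<beta> + \<gamma>)"
    and "coeff ([:- \<alpha>, 1:] * [:- \<beta>, 1:] * [:- \<gamma>, 1:]) 3 = 1"
  by (simp_all add: algebra_simps coeff_mult_0 numeral_3_eq_3 numeral_2_eq_2 coeff_pCons)

lemma structure_fn_gpoly:
  "structure_fn q t z w = (\<Sum>k\<le>3. coeff (gpoly q t) k * z ^ k * w ^ (3 - k))"
  by (simp add: structure_fn_def gpoly_def coeff_cubic numeral_3_eq_3 numeral_2_eq_2
      divide_inverse algebra_simps)

lemma power_int_diff_nat: "(u::complex) \<noteq> 0 \<Longrightarrow> u powi (a - int k) = u powi a * inverse u ^ k"
  by (simp add: power_int_diff divide_inverse power_inverse)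

lemma gcoef_sum_powi:
  fixes u v :: complex and a b :: int
  assumes "u \<noteq> 0" "v \<noteq> 0"
  shows "(\<Sum>i\<in>{0..3}. \<Sum>j\<in>{0..3}. gcoef q t i j * (u powi (a - i) * v powi (b - j)))
       = u powi a * v powi b * structure_fn q t (inverse u) (inverse v)"
proof -
  have shift: "w powi (c - k) = w powi c * inverse w ^ nat k"
    if "w \<noteq> 0" "k \<in> {0, 1, 2, 3}" for w :: complex and c k :: int
    using that power_int_diff_nat[of w c "nat k"] by auto
  have "{0..3::int} = {0, 1, 2, 3}" by auto
  moreover have "{..3::nat} = {0, 1, 2, 3}" by auto
  ultimately show ?thesis
    using assms
    by (simp add: gcoef_def structure_fn_gpoly shift)
      (simp add: algebra_simps power2_eq_square power3_eq_cube)
qed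

lemma gcoef_sum_powi_sym:
  fixes u v :: complex and a b :: int
  assumes "u \<noteq> 0" "v \<noteq> 0"
  shows "(\<Sum>i\<in>{0..3}. \<Sum>j\<in>{0..3}. gcoef q t i j * (u powi (a - i) * v powi (b - j))
            + gcoef q t j i * (u powi (b - j) * v powi (a - i)))
       = (u powi a * v powi b + u powi b * v powi a) * structure_fn q t (inverse u) (inverse v)"
proof -
  have "(\<Sum>i\<in>{0..3}. \<Sum>j\<in>{0..3}. gcoef q t j i * (u powi (b - j) * v powi (a - i)))
      = (\<Sum>j\<in>{0..3}. \<Sum>i\<in>{0..3}. gcoef q t j i * (u powi (b - j) * v powi (a - i)))"
    by (rule sum.swap)
  then show ?thesis
    by (simp add: sum.distrib gcoef_sum_powi[OF assms] algebra_simps)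
qed

lemma sum_sum_swap_pairs:
  "(\<Sum>i\<in>I. \<Sum>j\<in>J. \<Sum>p\<in>P. \<Sum>r\<in>R. F i j p r) = (\<Sum>p\<in>P. \<Sum>r\<in>R. \<Sum>i\<in>I. \<Sum>j\<in>J. F i j p r)"
proof -
  have "(\<Sum>i\<in>I. \<Sum>j\<in>J. \<Sum>p\<in>P. \<Sum>r\<in>R. F i j p r)
      = (\<Sum>x\<in>I \<times> J. \<Sum>y\<in>P \<times> R. F (fst x) (snd x) (fst y) (snd y))"
    by (simp add: sum.cartesian_product')
  also have "\<dots> = (\<Sum>y\<in>P \<times> R. \<Sum>x\<in>I \<times> J. F (fst x) (snd x) (fst y) (snd y))"
    by (rule sum.swap)
  finally show ?thesis
    by (simp add: sum.cartesian_product')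
qed

lemma gcoef_mode_sum:
  fixes W :: "'a \<Rightarrow> 'a \<Rightarrow> complex" and F :: "int \<Rightarrow> int \<Rightarrow> complex"
  assumes F: "\<And>m n. F m n = (\<Sum>p\<in>A. \<Sum>r\<in>A. W p r * (u p powi m * v p r powi n))"
    and nz: "\<And>p. u p \<noteq> 0" "\<And>p r. v p r \<noteq> 0"
  shows "(\<Sum>i\<in>{0..3}. \<Sum>j\<in>{0..3}. gcoef q t i j * F (a - i) (b - j) + gcoef q t j i * F (b - j) (a - i))
       = (\<Sum>p\<in>A. \<Sum>r\<in>A. W p r * ((u p powi a * v p r powi b + u p powi b * v p r powi a)
                                    * structure_fn q t (inverse (u p)) (inverse (v p r))))"
proof -
  have "(\<Sum>i\<in>{0..3}. \<Sum>j\<in>{0..3}. gcoef q t i j * F (a - i) (b - j) + gcoef q t j i * F (b - j) (a - i))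
      = (\<Sum>i\<in>{0..3}. \<Sum>j\<in>{0..3}. \<Sum>p\<in>A. \<Sum>r\<in>A.
          gcoef q t i j * (W p r * (u p powi (a - i) * v p r powi (b - j)))
           + gcoef q t j i * (W p r * (u p powi (b - j) * v p r powi (a - i))))"
    by (simp only: F sum_distrib_left sum.distrib)
  also have "\<dots> = (\<Sum>p\<in>A. \<Sum>r\<in>A. \<Sum>i\<in>{0..3}. \<Sum>j\<in>{0..3}.
          gcoef q t i j * (W p r * (u p powi (a - i) * v p r powi (b - j)))
           + gcoef q t j i * (W p r * (u p powi (b - j) * v p r powi (a - i))))"
    by (rule sum_sum_swap_pairs)
  also have "\<dots> = (\<Sum>p\<in>A. \<Sum>r\<in>A. W p r * (\<Sum>i\<in>{0..3}. \<Sum>j\<in>{0..3}.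
          gcoef q t i j * (u p powi (a - i) * v p r powi (b - j))
           + gcoef q t j i * (u p powi (b - j) * v p r powi (a - i))))"
    by (simp only: sum_distrib_left distrib_left mult.left_commute)
  also have "\<dots> = (\<Sum>p\<in>A. \<Sum>r\<in>A. W p r * ((u p powi a * v p r powi b + u p powi b * v p r powi a)
                                    * structure_fn q t (inverse (u p)) (inverse (v p r))))"
    by (simp add: gcoef_sum_powi_sym nz)
  finally show ?thesis .
qed

definition qshift :: "complex \<Rightarrow> 'n \<Rightarrow> ('n \<Rightarrow> complex) \<Rightarrow> 'n \<Rightarrow> complex" where
  "qshift q i x = x(i := q * x i)"

definition Acoef :: "complex \<Rightarrow> ('n::finite \<Rightarrow> complex) \<Rightarrow> 'n \<Rightarrow> complex" where
  "Acoef t x i = (\<Prod>j\<in>UNIV - {i}. (t * x i - x j) / (x i - x j))"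

definition pair_weight :: "complex \<Rightarrow> complex \<Rightarrow> 'n::finite fn \<Rightarrow> ('n \<Rightarrow> complex) \<Rightarrow> 'n \<Rightarrow> 'n \<Rightarrow> complex" where
  "pair_weight s t f x p r = (s / (1 - s^2))^2 * Acoef t x p * Acoef t (qshift (s^2) p x) r
                              * f (qshift (s^2) r (qshift (s^2) p x))"

lemma Mop_eq_sum: "Mop q t n f x = (\<Sum>i\<in>UNIV. x i powi n * Acoef t x i * f (qshift q i x))"
  by (simp add: Mop_def Gam_def Acoef_def qshift_def)

lemma ecoef_ecoef:
  "ecoef s t m (ecoef s t n f) x
     = (\<Sum>p\<in>UNIV. \<Sum>r\<in>UNIV. pair_weight s t f x p r
          * ((s * x p) powi m * (s * qshift (s^2) p x r) powi n))"
  by (simp add: ecoef_def pair_weight_def Mop_eq_sum sum_distrib_left sum_distrib_right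
      power_int_mult_distrib power2_eq_square algebra_simps)

lemma Acoef_factor:
  assumes "p \<noteq> r"
  shows "\<exists>R. Acoef t x r = (t * x r - x p) / (x r - x p) * R
            \<and> Acoef t (qshift q p x) r = (t * x r - q * x p) / (x r - q * x p) * R"
proof -
  have rest: "(\<Prod>j\<in>UNIV - {r} - {p}. (t * y r - y j) / (y r - y j))
           = (\<Prod>j\<in>UNIV - {r} - {p}. (t * x r - x j) / (x r - x j))"
    if "y = qshift q p x" for y
    using that assms by (intro prod.cong) (auto simp: qshift_def)
  have "Acoef t y r = (t * y r - y p) / (y r - y p) * (\<Prod>j\<in>UNIV - {r} - {p}. (t * y r - y j) / (y r - y j))"
    for y :: "_ \<Rightarrow> complex"
    unfolding Acoef_def using assms by (subst prod.remove[of _ p]) auto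
  from this[of x] this[of "qshift q p x"] rest show ?thesis
    using assms by (auto simp: qshift_def)
qed

lemma structure_fn_inverse:
  fixes X Y s t q :: complex
  assumes "X \<noteq> 0" "Y \<noteq> 0" "s \<noteq> 0" "t \<noteq> 0" "q \<noteq> 0"
  shows "structure_fn q t (inverse (s * X)) (inverse (s * Y))
       = (Y - q * X) * (t * Y - X) * (q * Y - t * X) / (s^3 * X^3 * Y^3 * t * q)"
  using assms unfolding structure_fn_def
  by (simp add: field_simps) (simp add: algebra_simps power3_eq_cube)

lemma two_point_antisym:
  fixes X Y s t q :: complex
  assumes "X \<noteq> 0" "Y \<noteq> 0" "X \<noteq> Y" "Y \<noteq> q * X" "X \<noteq> q * Y" "s \<noteq> 0" "t \<noteq> 0" "q \<noteq> 0"
  shows "(t * X - Y) / (X - Y) * ((t * Y - q * X) / (Y - q * X))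
           * structure_fn q t (inverse (s * X)) (inverse (s * Y))
       = - ((t * Y - X) / (Y - X) * ((t * X - q * Y) / (X - q * Y))
           * structure_fn q t (inverse (s * Y)) (inverse (s * X)))"
proof -
  define D where "D = s^3 * X^3 * Y^3 * t * q"
  have cancel: "A / B * (C / c) * (c * E * F / D') = A * C * E * F / (B * D')"
    if "c \<noteq> 0" for A B C c E F D' :: complex
    using that by (simp add: divide_simps)
  have "Y - q * X \<noteq> 0" "X - q * Y \<noteq> 0" using assms by auto
  have lhs: "(t * X - Y) / (X - Y) * ((t * Y - q * X) / (Y - q * X))
           * structure_fn q t (inverse (s * X)) (inverse (s * Y))
      = (t * X - Y) * (t * Y - q * X) * (t * Y - X) * (q * Y - t * X) / ((X - Y) * D)"
    unfolding structure_fn_inverse[OF assms(1,2,6,7,8)] D_def by (rule cancel) fact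
  have rhs: "(t * Y - X) / (Y - X) * ((t * X - q * Y) / (X - q * Y))
           * structure_fn q t (inverse (s * Y)) (inverse (s * X))
      = (t * Y - X) * (t * X - q * Y) * (t * X - Y) * (q * X - t * Y) / ((Y - X) * D)"
    unfolding structure_fn_inverse[OF assms(2,1,6,7,8)] D_def
    by (subst cancel) (fact, simp add: mult_ac)
  have numerator: "(t * Y - X) * (t * X - q * Y) * (t * X - Y) * (q * X - t * Y)
      = (t * X - Y) * (t * Y - q * X) * (t * Y - X) * (q * Y - t * X)"
    by (simp add: algebra_simps)
  have denominator: "(Y - X) * D = - ((X - Y) * D)"
    by (simp add: algebra_simps)
  show ?thesis
    unfolding lhs rhs numerator denominator by simp
qed

lemma structure_fn_diagonal: "q \<noteq> 0 \<Longrightarrow> structure_fn q t z (inverse q * z) = 0"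
  by (simp add: structure_fn_def)

lemma pair_term_antisym:
  fixes x :: "'n::finite \<Rightarrow> complex"
  assumes gen: "generic_pt (s^2) x" and "s \<noteq> 0" "t \<noteq> 0"
  shows "pair_weight s t f x p r
           * (((s * x p) powi a * (s * qshift (s^2) p x r) powi b
               + (s * x p) powi b * (s * qshift (s^2) p x r) powi a)
              * structure_fn (s^2) t (inverse (s * x p)) (inverse (s * qshift (s^2) p x r)))
       = - (pair_weight s t f x r p
           * (((s * x r) powi a * (s * qshift (s^2) r x p) powi b
               + (s * x r) powi b * (s * qshift (s^2) r x p) powi a)
              * structure_fn (s^2) t (inverse (s * x r)) (inverse (s * qshift (s^2) r x p))))"
proof (cases "p = r")
  case True
  have "structure_fn (s^2) t (inverse (s * x p)) (inverse (s * qshift (s^2) p x p)) = 0"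
    using structure_fn_diagonal[of "s^2" t "inverse (s * x p)"] \<open>s \<noteq> 0\<close>
    by (simp add: qshift_def mult.left_commute)
  with True show ?thesis by simp
next
  case False
  define q where "q = s^2"
  have "q \<noteq> 0" using \<open>s \<noteq> 0\<close> by (simp add: q_def)
  from gen False have pts: "x p \<noteq> 0" "x r \<noteq> 0" "x p \<noteq> x r" "x r \<noteq> q * x p" "x p \<noteq> q * x r"
    unfolding generic_pt_def q_def by metis+
  have shifted: "qshift q p x r = x r" "qshift q r x p = x p"
    using False by (simp_all add: qshift_def)
  obtain Rr where Rr: "Acoef t x r = (t * x r - x p) / (x r - x p) * Rr"
      "Acoef t (qshift q p x) r = (t * x r - q * x p) / (x r - q * x p) * Rr"
    using Acoef_factor[OF False] by blast
  obtain Rp where Rp: "Acoef t x p = (t * x p - x r) / (x p - x r) * Rp"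
      "Acoef t (qshift q r x) p = (t * x p - q * x r) / (x p - q * x r) * Rp"
    using Acoef_factor[OF False[symmetric]] by blast
  have commute: "qshift q r (qshift q p x) = qshift q p (qshift q r x)"
    using False by (simp add: qshift_def fun_upd_twist)
  define c where "c = (s / (1 - s^2))^2 * f (qshift q r (qshift q p x))"
  define S where "S = (s * x p) powi a * (s * x r) powi b + (s * x p) powi b * (s * x r) powi a"
  have S_swap: "(s * x r) powi a * (s * x p) powi b + (s * x r) powi b * (s * x p) powi a = S"
    by (simp add: S_def algebra_simps)
  have "pair_weight s t f x p r * (S * structure_fn q t (inverse (s * x p)) (inverse (s * x r)))
      = c * Rp * Rr * S * ((t * x p - x r) / (x p - x r) * ((t * x r - q * x p) / (x r - q * x p))
          * structure_fn q t (inverse (s * x p)) (inverse (s * x r)))"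
    unfolding pair_weight_def q_def[symmetric] Rp(1) Rr(2) c_def by (simp only: mult_ac)
  also have "\<dots> = c * Rp * Rr * S * - ((t * x r - x p) / (x r - x p) * ((t * x p - q * x r) / (x p - q * x r))
          * structure_fn q t (inverse (s * x r)) (inverse (s * x p)))"
    by (simp only: two_point_antisym[OF pts \<open>s \<noteq> 0\<close> \<open>t \<noteq> 0\<close> \<open>q \<noteq> 0\<close>])
  also have "\<dots> = - (pair_weight s t f x r p * (S * structure_fn q t (inverse (s * x r)) (inverse (s * x p))))"
    unfolding pair_weight_def q_def[symmetric] Rr(1) Rp(2) c_def commute
    by (simp only: mult_ac minus_mult_right)
  finally show ?thesis
    unfolding q_def[symmetric] shifted S_swap S_def[symmetric] .
qed

lemma sum_sum_antisym_eq_0: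
  fixes h :: "'a \<Rightarrow> 'a \<Rightarrow> 'b::{idom, ring_char_0}"
  assumes "\<And>p r. h p r = - h r p"
  shows "(\<Sum>p\<in>A. \<Sum>r\<in>A. h p r) = 0"
proof -
  have "(\<Sum>p\<in>A. \<Sum>r\<in>A. h p r) = (\<Sum>r\<in>A. \<Sum>p\<in>A. h p r)" by (rule sum.swap)
  also have "\<dots> = (\<Sum>r\<in>A. \<Sum>p\<in>A. - h r p)" by (intro sum.cong refl assms)
  also have "\<dots> = - (\<Sum>p\<in>A. \<Sum>r\<in>A. h p r)" by (simp only: sum_negf)
  finally have "(\<Sum>p\<in>A. \<Sum>r\<in>A. h p r) + (\<Sum>p\<in>A. \<Sum>r\<in>A. h p r) = 0"
    by (simp only: eq_neg_iff_add_eq_0)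
  then show ?thesis by (metis mult_2 mult_eq_0_iff zero_neq_numeral)
qed

theorem mainTheorem8:
  fixes s t :: complex and f :: "'n::finite fn" and x :: "'n \<Rightarrow> complex" and a b :: int
  assumes "s \<noteq> 0" and "s^2 \<noteq> 1" and "t \<noteq> 0"
    and "symmetric_fn f" and "generic_pt (s^2) x"
  shows "(\<Sum>i\<in>{0..3}. \<Sum>j\<in>{0..3}.
            gcoef (s^2) t i j * ecoef s t (a - i) (ecoef s t (b - j) f) x
          + gcoef (s^2) t j i * ecoef s t (b - j) (ecoef s t (a - i) f) x) = 0"
proof -
  have "x p \<noteq> 0" for p
    using \<open>generic_pt (s^2) x\<close> by (simp add: generic_pt_def)
  with \<open>s \<noteq> 0\<close> have nz: "s * x p \<noteq> 0" "s * qshift (s^2) p x r \<noteq> 0" for p r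
    by (simp_all add: qshift_def)
  have "(\<Sum>i\<in>{0..3}. \<Sum>j\<in>{0..3}.
            gcoef (s^2) t i j * ecoef s t (a - i) (ecoef s t (b - j) f) x
          + gcoef (s^2) t j i * ecoef s t (b - j) (ecoef s t (a - i) f) x)
      = (\<Sum>p\<in>UNIV. \<Sum>r\<in>UNIV. pair_weight s t f x p r
           * (((s * x p) powi a * (s * qshift (s^2) p x r) powi b
               + (s * x p) powi b * (s * qshift (s^2) p x r) powi a)
              * structure_fn (s^2) t (inverse (s * x p)) (inverse (s * qshift (s^2) p x r))))"
    by (rule gcoef_mode_sum[where F = "\<lambda>m n. ecoef s t m (ecoef s t n f) x"])
      (use nz in \<open>simp_all add: ecoef_ecoef\<close>)
  also have "\<dots> = 0"
    by (rule sum_sum_antisym_eq_0) (rule pair_term_antisym[OF \<open>generic_pt (s^2) x\<close> \<open>s \<noteq> 0\<close> \<open>t \<noteq> 0\<close>])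
  finally show ?thesis .
qed

end
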